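(* Let $\mathit{VI}$ be a finite set of variables with $\#\mathit{VI}=n$. For all $j,k\in\mathbb{N}$ with $1\le j\le k\le n$, we have $\mathit{TS}_j\subseteq\mathit{TSD}_k$.
   Context: $\mathit{SG}=\wp(\mathit{VI})\setminus\{\emptyset\}$ and $\mathit{SH}=\wp(\mathit{SG})$, ordered by set inclusion. For $S\in\mathit{SG}$, $\mathrm{tuples}_j(S)=\{T\subseteq S\mid \#T=j\}$, and for $sh\in\mathit{SH}$, $\mathrm{tuples}_j(sh)=\bigcup_{S'\in sh}\mathrm{tuples}_j(S')$. Define $\rho_{\mathit{TS}_j}(sh)=\{S\in\mathit{SG}\mid \mathrm{tuples}_j(S)\subseteq\mathrm{tuples}_j(sh)\}$ and $\mathit{TS}_j=\rho_{\mathit{TS}_j}(\mathit{SH})$. Define $\rho_{\mathit{TSD}_k}(sh)=\{\,S\in\mathit{SG}\mid \forall T\subseteq S:\ \#T<k\implies S=\bigcup\{U\in sh\mid T\subseteq U\subseteq S\}\,\}$ and $\mathit{TSD}_k=\rho_{\mathit{TSD}_k}(\mathit{SH})$. *)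

theory Defs
  imports Main
begin

definition SG :: "'a set \<Rightarrow> 'a set set" where
  "SG VI = Pow VI - {{}}"

definition SH :: "'a set \<Rightarrow> 'a set set set" where
  "SH VI = Pow (SG VI)"

definition tuples :: "nat \<Rightarrow> 'a set \<Rightarrow> 'a set set" where
  "tuples j S = {T. T \<subseteq> S \<and> card T = j}"

definition tuples_sh :: "nat \<Rightarrow> 'a set set \<Rightarrow> 'a set set" where
  "tuples_sh j sh = (\<Union>S'\<in>sh. tuples j S')"

definition rho_TS :: "'a set \<Rightarrow> nat \<Rightarrow> 'a set set \<Rightarrow> 'a set set" where
  "rho_TS VI j sh = {S \<in> SG VI. tuples j S \<subseteq> tuples_sh j sh}"

definition TS :: "'a set \<Rightarrow> nat \<Rightarrow> 'a set set set" where
  "TS VI j = rho_TS VI j ` SH VI"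

definition rho_TSD :: "'a set \<Rightarrow> nat \<Rightarrow> 'a set set \<Rightarrow> 'a set set" where
  "rho_TSD VI k sh = {S \<in> SG VI. \<forall>T. T \<subseteq> S \<longrightarrow> card T < k \<longrightarrow>
       S = \<Union>{U \<in> sh. T \<subseteq> U \<and> U \<subseteq> S}}"

definition TSD :: "'a set \<Rightarrow> nat \<Rightarrow> 'a set set set" where
  "TSD VI k = rho_TSD VI k ` SH VI"

end

theory Submission
  imports Defs
begin

text \<open>For \<open>j \<le> k\<close>, every \<open>X = \<rho>\<^sub>T\<^sub>S\<^sub>j(sh)\<close> is a fixpoint of \<open>\<rho>\<^sub>T\<^sub>S\<^sub>D\<^sub>k\<close>.
  One inclusion holds because each \<open>S \<in> X\<close> covers itself. For the other, take \<open>S\<close> in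
  \<open>\<rho>\<^sub>T\<^sub>S\<^sub>D\<^sub>k(X)\<close> and a \<open>j\<close>-tuple \<open>T \<subseteq> S\<close>. Pick \<open>x \<in> T\<close>. Since \<open>T - {x}\<close> has fewer
  than \<open>k\<close> elements, \<open>S\<close> is the union of the members of \<open>X\<close> lying between \<open>T - {x}\<close> and \<open>S\<close>.
  One of them contains \<open>x\<close> and hence \<open>T\<close>, so \<open>T\<close> is a \<open>j\<close>-tuple of \<open>sh\<close>.\<close>

lemma rho_TS_in_SH: "rho_TS VI j sh \<in> SH VI"
  by (auto simp: SH_def rho_TS_def)

lemma mem_rho_TSD_if_mem:
  assumes "S \<in> sh" and "S \<in> SG VI"
  shows "S \<in> rho_TSD VI k sh"
proof -
  have "S = \<Union>{U \<in> sh. T \<subseteq> U \<and> U \<subseteq> S}" if "T \<subseteq> S" for T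
    using assms(1) that by blast
  with assms(2) show ?thesis by (simp add: rho_TSD_def)
qed

lemma rho_TSD_covers_small_subset:
  assumes S: "S \<in> rho_TSD VI k sh"
    and T: "T \<subseteq> S" "1 \<le> card T" "card T \<le> k"
  shows "\<exists>U\<in>sh. T \<subseteq> U \<and> U \<subseteq> S"
proof -
  from T have "finite T" "T \<noteq> {}" by (auto intro: card_ge_0_finite)
  then obtain x where x: "x \<in> T" by blast
  have "card (T - {x}) < k"
    using x \<open>finite T\<close> T by (simp add: card_Diff_singleton)
  moreover have "T - {x} \<subseteq> S" using T by blast
  ultimately have "S = \<Union>{U \<in> sh. T - {x} \<subseteq> U \<and> U \<subseteq> S}"
    using S by (simp add: rho_TSD_def)
  moreover have "x \<in> S" using x T by blast
  ultimately obtain U where "U \<in> sh" "T - {x} \<subseteq> U" "x \<in> U" "U \<subseteq> S"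
    by blast
  then show ?thesis using x by blast
qed

lemma rho_TSD_rho_TS:
  assumes "1 \<le> j" and "j \<le> k"
  shows "rho_TSD VI k (rho_TS VI j sh) = rho_TS VI j sh"
proof
  show "rho_TS VI j sh \<subseteq> rho_TSD VI k (rho_TS VI j sh)"
  proof
    fix S assume S: "S \<in> rho_TS VI j sh"
    moreover from S have "S \<in> SG VI" by (simp add: rho_TS_def)
    ultimately show "S \<in> rho_TSD VI k (rho_TS VI j sh)"
      by (rule mem_rho_TSD_if_mem)
  qed
next
  show "rho_TSD VI k (rho_TS VI j sh) \<subseteq> rho_TS VI j sh"
  proof
    fix S assume S: "S \<in> rho_TSD VI k (rho_TS VI j sh)"
    have "tuples j S \<subseteq> tuples_sh j sh"
    proof
      fix T assume "T \<in> tuples j S"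
      then have "T \<subseteq> S" "card T = j" by (auto simp: tuples_def)
      then have "\<exists>U\<in>rho_TS VI j sh. T \<subseteq> U \<and> U \<subseteq> S"
        using rho_TSD_covers_small_subset[OF S] assms by simp
      then obtain U where U: "U \<in> rho_TS VI j sh" "T \<subseteq> U" by blast
      then have "T \<in> tuples j U" using \<open>card T = j\<close> by (simp add: tuples_def)
      with U(1) show "T \<in> tuples_sh j sh" by (auto simp: rho_TS_def)
    qed
    with S show "S \<in> rho_TS VI j sh" by (simp add: rho_TS_def rho_TSD_def)
  qed
qed

theorem corollary3p12:
  fixes VI :: "'a set" and n j k :: nat
  assumes "finite VI" and "card VI = n"
    and "1 \<le> j" and "j \<le> k" and "k \<le> n"
  shows "TS VI j \<subseteq> TSD VI k"
proof
  fix X assume "X \<in> TS VI j"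
  then obtain sh where X: "X = rho_TS VI j sh" by (auto simp: TS_def)
  then have "X = rho_TSD VI k X"
    using rho_TSD_rho_TS[OF assms(3,4), of VI sh] by simp
  moreover have "X \<in> SH VI" using X rho_TS_in_SH by simp
  ultimately show "X \<in> TSD VI k" unfolding TSD_def by blast
qed

end
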